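(* Let $T_1$ be a quadtree in $\mathbb{R}^d$ with $n$ cells, where the dimension $d$ is a constant. Then its extended quadtree $T^*$ has $\mathcal{O}(n)$ cells.
   Context: A quadtree on an axis-aligned root hypercube $R\subset\mathbb{R}^d$ is a hierarchical decomposition in which every node has an associated axis-aligned hypercube (cell) and is either a leaf or has $2^d$ equal-sized children whose cells subdivide its cell. The size $|C|$ of a cell is its edge length. Two cells are neighbors if they are interior-disjoint and share (part of) a $(d-1)$-dimensional facet. For an integer $j$, a cell $C$ is $2^j$-smooth if every leaf neighboring $C$ has size at most $2^j|C|$. Extended quadtree: the cells of $T_1$ get brand $1$. Recursively, for $j\ge1$, let $T^j$ be the quadtree formed by $\bigcup_{i\le j}T_i$, and let $T_{j+1}$ be the minimal set of cells obtained by splitting cells of $T^j$ such that every cell of $T_j$ is $2^j$-smooth in the resulting quadtree; the cells of $T_{j+1}$ get brand $j+1$. The extended quadtree is $T^*=T^{d+1}$. *)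

theory Defs
  imports Main
begin

text \<open>Cells are encoded combinatorially relative to the root hypercube R:
  a cell (k, a) with a = [a_0,...,a_{d-1}] is the cube
  prod_i [lo_i + a_i s/2^k, lo_i + (a_i+1) s/2^k] where R = prod_i [lo_i, lo_i + s].
  Its size is s / 2^k.  All notions below (neighbourhood, smoothness) are invariant
  under translation and scaling, so this encoding is faithful for any root R.\<close>

type_synonym cell = "nat \<times> nat list"

definition valid_cell :: "nat \<Rightarrow> cell \<Rightarrow> bool" where
  "valid_cell d c \<longleftrightarrow> length (snd c) = d \<and> (\<forall>x\<in>set (snd c). x < 2 ^ fst c)"

definition root_cell :: "nat \<Rightarrow> cell" where
  "root_cell d = (0, replicate d 0)"

definition parent :: "cell \<Rightarrow> cell" where
  "parent c = (fst c - 1, map (\<lambda>x. x div 2) (snd c))"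

definition children :: "nat \<Rightarrow> cell \<Rightarrow> cell set" where
  "children d c = {(Suc (fst c), b) | b. length b = d \<and> (\<forall>i<d. b ! i div 2 = snd c ! i)}"

definition quadtree :: "nat \<Rightarrow> cell set \<Rightarrow> bool" where
  "quadtree d T \<longleftrightarrow> finite T \<and> root_cell d \<in> T \<and> (\<forall>c\<in>T. valid_cell d c)
     \<and> (\<forall>c\<in>T. 0 < fst c \<longrightarrow> parent c \<in> T)
     \<and> (\<forall>c\<in>T. children d c \<subseteq> T \<or> children d c \<inter> T = {})"

definition leaf :: "nat \<Rightarrow> cell set \<Rightarrow> cell \<Rightarrow> bool" where
  "leaf d T c \<longleftrightarrow> c \<in> T \<and> children d c \<inter> T = {}"

text \<open>Coordinates of the cell boundaries in units of 1/2^m of the root size (m \<ge> level).\<close>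
definition lo :: "nat \<Rightarrow> cell \<Rightarrow> nat \<Rightarrow> nat" where
  "lo m c i = snd c ! i * 2 ^ (m - fst c)"

definition hi :: "nat \<Rightarrow> cell \<Rightarrow> nat \<Rightarrow> nat" where
  "hi m c i = (snd c ! i + 1) * 2 ^ (m - fst c)"

text \<open>Two cells are neighbours iff they are interior-disjoint and share a
  (d-1)-dimensional part of a facet: they touch in exactly one coordinate direction j
  (one's upper face equals the other's lower face) and their projections overlap
  with positive length in every other coordinate.\<close>
definition neighbors :: "nat \<Rightarrow> cell \<Rightarrow> cell \<Rightarrow> bool" where
  "neighbors d c c' \<longleftrightarrow> (let m = max (fst c) (fst c') in
     \<exists>j<d. (hi m c j = lo m c' j \<or> hi m c' j = lo m c j) \<and>
       (\<forall>i<d. i \<noteq> j \<longrightarrow> max (lo m c i) (lo m c' i) < min (hi m c i) (hi m c' i)))"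

text \<open>C is 2^j-smooth in Q: every leaf L of Q neighbouring C has |L| \<le> 2^j |C|,
  i.e. 2^(-level L) \<le> 2^j 2^(-level C).\<close>
definition smooth :: "nat \<Rightarrow> cell set \<Rightarrow> nat \<Rightarrow> cell \<Rightarrow> bool" where
  "smooth d Q j c \<longleftrightarrow> (\<forall>L. leaf d Q L \<and> neighbors d c L \<longrightarrow> int (fst c) - int (fst L) \<le> int j)"

text \<open>Cells of brand j, given the cumulative trees S j = T^j.\<close>
definition brand :: "(nat \<Rightarrow> cell set) \<Rightarrow> nat \<Rightarrow> cell set" where
  "brand S j = (if j \<le> 1 then S 1 else S j - S (j - 1))"

definition step_ok :: "nat \<Rightarrow> (nat \<Rightarrow> cell set) \<Rightarrow> nat \<Rightarrow> cell set \<Rightarrow> bool" where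
  "step_ok d S j Q \<longleftrightarrow> quadtree d Q \<and> S j \<subseteq> Q \<and> (\<forall>c\<in>brand S j. smooth d Q j c)"

text \<open>S is (a choice of) the sequence T^1 \<subseteq> T^2 \<subseteq> ... of the extended quadtree
  construction for T_1 = T; T^* = S (d+1).  T_{j+1} = S(j+1) - S j is required to be
  minimal, i.e. S (j+1) is inclusion-minimal among admissible refinements.\<close>
definition extended_seq :: "nat \<Rightarrow> cell set \<Rightarrow> (nat \<Rightarrow> cell set) \<Rightarrow> bool" where
  "extended_seq d T S \<longleftrightarrow> S 1 = T \<and>
     (\<forall>j. 1 \<le> j \<and> j \<le> d \<longrightarrow>
        step_ok d S j (S (Suc j)) \<and>
        (\<forall>Q. step_ok d S j Q \<and> Q \<subseteq> S (Suc j) \<longrightarrow> Q = S (Suc j)))"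

end

theory Submission
  imports Defs
begin

text \<open>Call two cells of the same level touching if their coordinates differ by at most one
  in every direction. A leaf L that has to be split so that a neighbouring cell c of T^j becomes
  2^j-smooth is larger than c, so it touches the ancestor of c at the level of L, which lies in T^j.
  Intersecting T^(j+1) with T^j plus the children of all cells touching cells of T^j therefore
  keeps a quadtree in which the cells of T_j are still smooth; by minimality nothing is removed,
  so |T^(j+1)| \<le> (1 + 3^d 2^d) |T^j| and |T^*| \<le> (1 + 6^d)^d |T_1|.\<close>

lemma card_lists_in_box:
  fixes l :: "nat \<Rightarrow> nat" and n w :: nat
  defines "F \<equiv> {b. length b = n \<and> (\<forall>i<n. l i \<le> b!i \<and> b!i \<le> l i + w)}"
  shows "finite F \<and> card F \<le> (w+1)^n"
proof -
  define f where "f b = map (\<lambda>i. b!i - l i) [0..<n]" for b :: "nat list"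
  define G where "G = {xs. set xs \<subseteq> {0..w} \<and> length xs = n}"
  have inj: "inj_on f F"
  proof (rule inj_onI)
    fix x y assume x: "x \<in> F" and y: "y \<in> F" and e: "f x = f y"
    show "x = y"
    proof (rule nth_equalityI)
      show "length x = length y" using x y by (simp add: F_def)
      fix i assume "i < length x"
      hence i: "i < n" using x by (simp add: F_def)
      have "x!i - l i = y!i - l i" using arg_cong[OF e, of "\<lambda>z. z ! i"] i by (simp add: f_def)
      moreover have "l i \<le> x!i" "l i \<le> y!i" using x y i by (auto simp: F_def)
      ultimately show "x!i = y!i" by simp
    qed
  qed
  have sub: "f ` F \<subseteq> G" by (force simp: F_def G_def f_def)
  have fG: "finite G" and cG: "card G = (w+1)^n"
    unfolding G_def by (simp_all add: finite_lists_length_eq card_lists_length_eq)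
  have "finite F" using fG sub inj finite_subset finite_imageD by blast
  moreover have "card F \<le> card G" using sub fG inj card_inj_on_le by blast
  ultimately show ?thesis using cG by simp
qed

definition ancestor :: "nat \<Rightarrow> cell \<Rightarrow> cell" where
  "ancestor k c = (fst c - k, map (\<lambda>x. x div 2 ^ k) (snd c))"

definition touching :: "nat \<Rightarrow> cell \<Rightarrow> cell set" where
  "touching d A = {(fst A, b) | b. length b = d \<and> (\<forall>i<d. b!i \<le> snd A!i + 1 \<and> snd A!i \<le> b!i + 1)}"

definition near_cells :: "nat \<Rightarrow> cell set \<Rightarrow> cell set" where
  "near_cells d P = (\<Union>A\<in>P. touching d A)"

definition refinement_hull :: "nat \<Rightarrow> cell set \<Rightarrow> cell set" where
  "refinement_hull d P = P \<union> (\<Union>D\<in>near_cells d P. children d D)"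

lemma card_touching_le: "finite (touching d A) \<and> card (touching d A) \<le> 3^d"
proof -
  define F where "F = {b. length b = d \<and> (\<forall>i<d. snd A!i - 1 \<le> b!i \<and> b!i \<le> (snd A!i - 1) + 2)}"
  have F: "finite F \<and> card F \<le> 3^d"
    using card_lists_in_box[of d "\<lambda>i. snd A!i - 1" 2] by (simp add: F_def)
  have "b \<in> F" if "length b = d" "\<forall>i<d. b!i \<le> snd A!i + 1 \<and> snd A!i \<le> b!i + 1" for b
    using that by (auto simp: F_def)
  then have sub: "touching d A \<subseteq> Pair (fst A) ` F" by (auto simp: touching_def)
  then have "card (touching d A) \<le> card F"
    using F card_mono[OF finite_imageI sub] card_image_le[of F "Pair (fst A)"] by (meson le_trans)
  then show ?thesis using F finite_subset[OF sub finite_imageI] by simp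
qed

lemma card_children_le: "finite (children d D) \<and> card (children d D) \<le> 2^d"
proof -
  define F where "F = {b. length b = d \<and> (\<forall>i<d. 2 * snd D!i \<le> b!i \<and> b!i \<le> 2 * snd D!i + 1)}"
  have F: "finite F \<and> card F \<le> 2^d"
    using card_lists_in_box[of d "\<lambda>i. 2 * snd D!i" 1, unfolded one_add_one] by (simp add: F_def)
  have "b \<in> F" if "length b = d" "\<forall>i<d. b!i div 2 = snd D!i" for b
    using that by (auto simp: F_def)
  then have sub: "children d D \<subseteq> Pair (Suc (fst D)) ` F" by (auto simp: children_def)
  then have "card (children d D) \<le> card F"
    using F card_mono[OF finite_imageI sub] card_image_le[of F "Pair (Suc (fst D))"] by (meson le_trans)
  then show ?thesis using F finite_subset[OF sub finite_imageI] by simp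
qed

lemma card_near_cells_le:
  assumes "finite P"
  shows "finite (near_cells d P) \<and> card (near_cells d P) \<le> 3^d * card P"
proof -
  have "card (near_cells d P) \<le> (\<Sum>A\<in>P. card (touching d A))"
    unfolding near_cells_def using card_UN_le[OF assms] .
  also have "\<dots> \<le> 3^d * card P" using card_touching_le sum_bounded_above[of P "\<lambda>A. card (touching d A)" "3^d"]
    by (simp add: mult.commute)
  finally show ?thesis using assms card_touching_le by (simp add: near_cells_def)
qed

lemma card_refinement_hull_le:
  assumes "finite P"
  shows "finite (refinement_hull d P) \<and> card (refinement_hull d P) \<le> (1 + 6^d) * card P"
proof -
  have fN: "finite (near_cells d P)" and cN: "card (near_cells d P) \<le> 3^d * card P"
    using card_near_cells_le[OF assms] by auto
  have "card (\<Union>D\<in>near_cells d P. children d D) \<le> (\<Sum>D\<in>near_cells d P. card (children d D))"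
    using card_UN_le[OF fN] .
  also have "\<dots> \<le> 2^d * card (near_cells d P)"
    using card_children_le sum_bounded_above[of "near_cells d P" "\<lambda>D. card (children d D)" "2^d"]
    by (simp add: mult.commute)
  also have "\<dots> \<le> 2^d * (3^d * card P)" using cN by simp
  also have "\<dots> = 6^d * card P" by (simp add: mult.assoc[symmetric] flip: power_mult_distrib)
  finally have "card (\<Union>D\<in>near_cells d P. children d D) \<le> 6^d * card P" .
  moreover have "card (refinement_hull d P) \<le> card P + card (\<Union>D\<in>near_cells d P. children d D)"
    unfolding refinement_hull_def by (rule card_Un_le)
  moreover have "finite (refinement_hull d P)"
    using assms fN card_children_le by (simp add: refinement_hull_def)
  ultimately show ?thesis by simp
qed

lemma ancestor_Suc: "ancestor (Suc k) c = parent (ancestor k c)"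
proof -
  have "x div 2 ^ k div 2 = x div 2 ^ Suc k" for x :: nat
    by (metis div_mult2_eq power_Suc2)
  then show ?thesis by (simp add: parent_def ancestor_def del: power_Suc)
qed

lemma quadtree_ancestor_mem:
  assumes "quadtree d P" "c \<in> P" "k \<le> fst c"
  shows "ancestor k c \<in> P"
  using assms(3)
proof (induction k)
  case 0
  then show ?case using assms(2) by (simp add: ancestor_def)
next
  case (Suc k)
  then have "ancestor k c \<in> P" "0 < fst (ancestor k c)" by (auto simp: ancestor_def)
  then show ?case using assms(1) by (simp add: ancestor_Suc quadtree_def)
qed

lemma parent_of_child:
  assumes "E \<in> children d D" "length (snd D) = d"
  shows "parent E = D"
proof -
  obtain b where b: "E = (Suc (fst D), b)" "length b = d" "\<forall>i<d. b!i div 2 = snd D!i"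
    using assms(1) by (auto simp: children_def)
  have "map (\<lambda>x. x div 2) b = snd D"
    by (rule nth_equalityI) (use b assms(2) in auto)
  thus ?thesis using b(1) by (simp add: parent_def)
qed

lemma children_nonempty: "length (snd L) = d \<Longrightarrow> children d L \<noteq> {}"
  by (auto simp: children_def intro!: exI[of _ "map ((*) 2) (snd L)"])

lemma parent_touching:
  assumes "D \<in> touching d A" "length (snd A) = d"
  shows "parent D \<in> touching d (parent A)"
proof -
  obtain b where b: "D = (fst A, b)" "length b = d" "\<forall>i<d. b!i \<le> snd A!i + 1 \<and> snd A!i \<le> b!i + 1"
    using assms(1) by (auto simp: touching_def)
  have "\<forall>i<d. b!i div 2 \<le> snd A!i div 2 + 1 \<and> snd A!i div 2 \<le> b!i div 2 + 1"
    using b(3) by fastforce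
  thus ?thesis using b assms(2) by (auto simp: touching_def parent_def)
qed

lemma div_within_one:
  fixes b x q :: nat
  assumes "b * q \<le> x + 1" "x \<le> (b + 1) * q" "0 < q"
  shows "b \<le> x div q + 1 \<and> x div q \<le> b + 1"
proof
  have "x div q \<le> (b + 1) * q div q" using assms(2) div_le_mono by blast
  thus "x div q \<le> b + 1" using assms(3) by simp
next
  show "b \<le> x div q + 1"
  proof (rule ccontr)
    assume "\<not> b \<le> x div q + 1"
    then have "(x div q + 2) * q \<le> b * q" by (intro mult_le_mono1) simp
    moreover have "x < (x div q + 1) * q"
      using assms(3) by (metis add.commute div_mult_mod_eq mod_less_divisor mult.commute
          mult_Suc_right nat_add_left_cancel_less plus_1_eq_Suc)
    ultimately show False using assms(1,3) by (simp add: algebra_simps)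
  qed
qed

text \<open>Measured at the finer level of c, the intervals of c and L meet in every direction, so
  the coordinates of c, scaled down to the level of L, are within one of those of L.\<close>
lemma neighbor_touches_ancestor:
  assumes "neighbors d c L" "fst L \<le> fst c" "length (snd c) = d" "length (snd L) = d"
  shows "L \<in> touching d (ancestor (fst c - fst L) c)"
proof -
  define s where "s = fst c - fst L"
  have m: "max (fst c) (fst L) = fst c" using assms(2) by simp
  obtain j where j: "j < d" "hi (fst c) c j = lo (fst c) L j \<or> hi (fst c) L j = lo (fst c) c j"
    "\<forall>i<d. i \<noteq> j \<longrightarrow> max (lo (fst c) c i) (lo (fst c) L i) < min (hi (fst c) c i) (hi (fst c) L i)"
    using assms(1) unfolding neighbors_def Let_def m by blast
  have "snd L ! i \<le> snd c ! i div 2^s + 1 \<and> snd c ! i div 2^s \<le> snd L ! i + 1" if "i < d" for i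
  proof -
    have "snd L ! i * 2^s \<le> snd c ! i + 1 \<and> snd c ! i \<le> (snd L ! i + 1) * 2^s"
      using j that by (cases "i = j") (fastforce simp: lo_def hi_def s_def)+
    thus ?thesis using div_within_one[of "snd L ! i" "2^s" "snd c ! i"] by simp
  qed
  moreover have "fst (ancestor s c) = fst L" using assms(2) by (simp add: ancestor_def s_def)
  moreover have "snd (ancestor s c) ! i = snd c ! i div 2^s" if "i < d" for i
    using that assms(3) by (simp add: ancestor_def)
  ultimately show ?thesis using assms(4)
    unfolding s_def[symmetric] touching_def by (intro CollectI exI[of _ "snd L"]) simp
qed

lemma refinement_hull_parent_closed:
  assumes "quadtree d P" "E \<in> refinement_hull d P" "0 < fst E" "valid_cell d (parent E)"
  shows "parent E \<in> refinement_hull d P"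
proof (cases "E \<in> P")
  case True
  then show ?thesis using assms(1,3) by (auto simp: quadtree_def refinement_hull_def)
next
  case False
  then obtain A D where A: "A \<in> P" "D \<in> touching d A" and E: "E \<in> children d D"
    using assms(2) by (auto simp: refinement_hull_def near_cells_def)
  have lD: "length (snd D) = d" and fD: "fst D = fst A" using A(2) by (auto simp: touching_def)
  have pE: "parent E = D" using parent_of_child[OF E lD] .
  have lA: "length (snd A) = d" using assms(1) A(1) by (simp add: quadtree_def valid_cell_def)
  show ?thesis
  proof (cases "fst A = 0")
    case True
    then have "D = root_cell d"
      using assms(4) pE fD lD by (cases D) (auto simp: valid_cell_def root_cell_def
          intro: replicate_length_same[symmetric])
    then show ?thesis using assms(1) pE by (auto simp: quadtree_def refinement_hull_def)
  next
    case False
    then have "parent D \<in> near_cells d P"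
      using assms(1) A parent_touching[OF A(2) lA] by (auto simp: quadtree_def near_cells_def)
    moreover have "D \<in> children d (parent D)"
      using A(2) False by (auto simp: touching_def children_def parent_def)
    ultimately show ?thesis using pE by (auto simp: refinement_hull_def)
  qed
qed

lemma refinement_hull_children_closed:
  assumes "quadtree d P" "length (snd C) = d" "children d C \<inter> refinement_hull d P \<noteq> {}"
  shows "children d C \<subseteq> refinement_hull d P"
proof -
  obtain E where E: "E \<in> children d C" "E \<in> refinement_hull d P" using assms(3) by blast
  have pE: "parent E = C" using parent_of_child[OF E(1) assms(2)] .
  have "C \<in> near_cells d P"
  proof (cases "E \<in> P")
    case True
    moreover have "0 < fst E" using E(1) by (auto simp: children_def)
    ultimately have "parent E \<in> P" using assms(1) unfolding quadtree_def by blast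
    then have "C \<in> P" using pE by simp
    then show ?thesis using assms(2) by (cases C) (force simp: near_cells_def touching_def)
  next
    case False
    then obtain D where "D \<in> near_cells d P" "E \<in> children d D"
      using E(2) by (auto simp: refinement_hull_def)
    moreover have "length (snd D) = d" using \<open>D \<in> near_cells d P\<close> by (auto simp: near_cells_def touching_def)
    ultimately show ?thesis using pE parent_of_child by blast
  qed
  then show ?thesis by (auto simp: refinement_hull_def)
qed

lemma quadtree_Int_refinement_hull:
  assumes qP: "quadtree d P" and qQ: "quadtree d Q"
  shows "quadtree d (Q \<inter> refinement_hull d P)"
  unfolding quadtree_def
proof (intro conjI ballI impI)
  show "finite (Q \<inter> refinement_hull d P)" using qQ by (simp add: quadtree_def)
  show "root_cell d \<in> Q \<inter> refinement_hull d P"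
    using qP qQ by (simp add: quadtree_def refinement_hull_def)
next
  fix c assume "c \<in> Q \<inter> refinement_hull d P"
  then show "valid_cell d c" using qQ by (simp add: quadtree_def)
next
  fix E assume E: "E \<in> Q \<inter> refinement_hull d P" "0 < fst E"
  then have "parent E \<in> Q" using qQ by (simp add: quadtree_def)
  moreover have "valid_cell d (parent E)" using calculation qQ by (simp add: quadtree_def)
  ultimately show "parent E \<in> Q \<inter> refinement_hull d P"
    using refinement_hull_parent_closed[OF qP] E by blast
next
  fix C assume C: "C \<in> Q \<inter> refinement_hull d P"
  have "length (snd C) = d" using C qQ by (simp add: quadtree_def valid_cell_def)
  then show "children d C \<subseteq> Q \<inter> refinement_hull d P \<or> children d C \<inter> (Q \<inter> refinement_hull d P) = {}"
    using refinement_hull_children_closed[OF qP] C qQ unfolding quadtree_def by blast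
qed

text \<open>A leaf of the restriction that is too large for c is not a leaf of Q, and it touches the
  ancestor of c in P, so its children were kept.\<close>
lemma smooth_Int_refinement_hull:
  assumes qP: "quadtree d P" and qQ: "quadtree d Q" and c: "c \<in> P" and sm: "smooth d Q j c"
  shows "smooth d (Q \<inter> refinement_hull d P) j c"
  unfolding smooth_def
proof (intro allI impI)
  fix L assume L: "leaf d (Q \<inter> refinement_hull d P) L \<and> neighbors d c L"
  show "int (fst c) - int (fst L) \<le> int j"
  proof (rule ccontr)
    assume too_big: "\<not> ?thesis"
    have LQ: "L \<in> Q" using L by (simp add: leaf_def)
    have lL: "length (snd L) = d" using LQ qQ by (simp add: quadtree_def valid_cell_def)
    have lc: "length (snd c) = d" using c qP by (simp add: quadtree_def valid_cell_def)
    have "\<not> leaf d Q L" using sm L too_big unfolding smooth_def by blast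
    then have cLQ: "children d L \<subseteq> Q" using qQ LQ by (auto simp: leaf_def quadtree_def)
    have "ancestor (fst c - fst L) c \<in> P" using quadtree_ancestor_mem[OF qP c] by simp
    then have "L \<in> near_cells d P"
      using neighbor_touches_ancestor[of d c L] L too_big lc lL by (auto simp: near_cells_def)
    then have "children d L \<subseteq> Q \<inter> refinement_hull d P" using cLQ by (auto simp: refinement_hull_def)
    then show False using L children_nonempty[OF lL] by (auto simp: leaf_def)
  qed
qed

lemma minimal_step_subset_refinement_hull:
  assumes qP: "quadtree d (S j)" and ok: "step_ok d S j Q" and B: "brand S j \<subseteq> S j"
    and mini: "\<forall>Q'. step_ok d S j Q' \<and> Q' \<subseteq> Q \<longrightarrow> Q' = Q"
  shows "Q \<subseteq> refinement_hull d (S j)"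
proof -
  have qQ: "quadtree d Q" and PQ: "S j \<subseteq> Q" and sm: "\<forall>c\<in>brand S j. smooth d Q j c"
    using ok by (auto simp: step_ok_def)
  have "step_ok d S j (Q \<inter> refinement_hull d (S j))"
    unfolding step_ok_def using quadtree_Int_refinement_hull[OF qP qQ] PQ B sm
      smooth_Int_refinement_hull[OF qP qQ] by (auto simp: refinement_hull_def)
  then show ?thesis using mini by blast
qed

lemma extended_seq_card_le:
  assumes qT: "quadtree d T" and ex: "extended_seq d T S" and k: "k \<le> d"
  shows "quadtree d (S (Suc k)) \<and> card (S (Suc k)) \<le> (1 + 6^d)^k * card T"
  using k
proof (induction k)
  case 0
  then show ?case using qT ex by (simp add: extended_seq_def)
next
  case (Suc k)
  then have qP: "quadtree d (S (Suc k))" and IH: "card (S (Suc k)) \<le> (1 + 6^d)^k * card T"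
    by auto
  have ok: "step_ok d S (Suc k) (S (Suc (Suc k)))"
    and mini: "\<forall>Q. step_ok d S (Suc k) Q \<and> Q \<subseteq> S (Suc (Suc k)) \<longrightarrow> Q = S (Suc (Suc k))"
    using ex Suc.prems by (auto simp: extended_seq_def)
  have "brand S (Suc k) \<subseteq> S (Suc k)" by (auto simp: brand_def)
  then have sub: "S (Suc (Suc k)) \<subseteq> refinement_hull d (S (Suc k))"
    using minimal_step_subset_refinement_hull[OF qP ok] mini by blast
  have fP: "finite (S (Suc k))" using qP by (simp add: quadtree_def)
  have "card (S (Suc (Suc k))) \<le> card (refinement_hull d (S (Suc k)))"
    using sub card_refinement_hull_le[OF fP] card_mono by blast
  also have "\<dots> \<le> (1 + 6^d) * card (S (Suc k))" using card_refinement_hull_le[OF fP] by blast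
  also have "\<dots> \<le> (1 + 6^d) * ((1 + 6^d)^k * card T)" using IH by (rule mult_le_mono2)
  also have "\<dots> = (1 + 6^d)^Suc k * card T" by (simp add: algebra_simps)
  finally show ?case using ok by (simp add: step_ok_def)
qed

theorem corollary14:
  shows "\<forall>d::nat. 1 \<le> d \<longrightarrow> (\<exists>C::nat. \<forall>T S.
           quadtree d T \<and> extended_seq d T S \<longrightarrow> card (S (Suc d)) \<le> C * card T)"
proof (intro allI impI)
  fix d :: nat
  show "\<exists>C. \<forall>T S. quadtree d T \<and> extended_seq d T S \<longrightarrow> card (S (Suc d)) \<le> C * card T"
    using extended_seq_card_le[of d _ _ d] by blast
qed

end
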